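(* Let $n\ge1$ and suppose $1\le p\le q<\infty$ and $\alpha\in\mathbb{R}$, with $\alpha\le0$ if $p=q$. Then for every cube $Q_0\subset\mathbb{R}^n$, $SR_{p,q}\log^\alpha(Q_0)=M_{n(\frac1p-\frac1q),\alpha,Q_0}L^q(Q_0)$; more precisely, $\|f\|_{SR_{p,q}\log^\alpha(Q_0)}\approx\|M_{n(\frac1p-\frac1q),\alpha,Q_0}f\|_{L^q(Q_0)}$, with constants independent of $f$ and $Q_0$.
   Context: Cubes have sides parallel to the axes; $\mathcal{D}(Q_0)$ is the family of dyadic subcubes of $Q_0$. A countable $(Q_i)_{i\in I}\subset\mathcal{D}(Q_0)$ is sparse if there exist pairwise disjoint measurable $E_{Q_i}\subseteq Q_i$ with $|E_{Q_i}|\ge\frac12|Q_i|$; $S(Q_0)$ is the set of sparse families. $(a)_-=\min\{a,0\}$, $\log$ is the natural logarithm, $p'$ is the dual exponent. $SR_{p,q}\log^\alpha(Q_0)$ is the set of $f\in L^1(Q_0)$ with $\|f\|_{SR_{p,q}\log^\alpha(Q_0)}=\sup_{(Q_i)\in S(Q_0)}\big\{\sum_i\big[(1-(\log|Q_i|)_-)^\alpha|Q_i|^{-1/p'}\int_{Q_i}|f|\big]^q\big\}^{1/q}<\infty$. For $0\le\lambda<n$, $M_{\lambda,\alpha,Q_0}f(x)=\sup_{Q\in\mathcal{D}(Q_0),\,x\in Q}|Q|^{\frac\lambda n-1}(1-(\log|Q|)_-)^\alpha\int_Q|f|$, $x\in Q_0$, and $M_{\lambda,\alpha,Q_0}L^q(Q_0)=\{f\in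 L^1(Q_0):M_{\lambda,\alpha,Q_0}f\in L^q(Q_0)\}$. *)

theory Defs
  imports "HOL-Analysis.Analysis"
begin

text \<open>Real powers on extended nonnegative reals (used with positive exponents):
  \<open>\<infinity>\<close> stays \<open>\<infinity>\<close>.\<close>
definition enn_powr :: "ennreal \<Rightarrow> real \<Rightarrow> ennreal" where
  "enn_powr x r = (if x = top then top else ennreal (enn2real x powr r))"

definition cube :: "real^'n \<Rightarrow> real \<Rightarrow> (real^'n) set" where
  "cube c s = {x. \<forall>i. c$i \<le> x$i \<and> x$i \<le> c$i + s}"

definition dyadic :: "real^'n \<Rightarrow> real \<Rightarrow> (real^'n) set set" where
  "dyadic a l = {cube (a + (l / 2^k) *\<^sub>R (\<chi> i. real (j i))) (l / 2^k) | k j.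
                   \<forall>i. j i < 2^k}"

definition sparse :: "real^'n \<Rightarrow> real \<Rightarrow> (real^'n) set set set" where
  "sparse a l = {S. S \<subseteq> dyadic a l \<and> countable S \<and>
     (\<exists>E. (\<forall>Q\<in>S. E Q \<in> sets lebesgue \<and> E Q \<subseteq> Q \<and> measure lebesgue (E Q) \<ge> measure lebesgue Q / 2)
        \<and> (\<forall>Q\<in>S. \<forall>Q'\<in>S. Q \<noteq> Q' \<longrightarrow> E Q \<inter> E Q' = {}))}"

definition logw :: "real \<Rightarrow> (real^'n) set \<Rightarrow> real" where
  "logw \<alpha> Q = (1 - min (ln (measure lebesgue Q)) 0) powr \<alpha>"

definition SR_norm :: "real \<Rightarrow> real \<Rightarrow> real \<Rightarrow> real^'n \<Rightarrow> real \<Rightarrow> (real^'n \<Rightarrow> real) \<Rightarrow> ennreal" where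
  "SR_norm p q \<alpha> a l f =
     enn_powr (SUP S \<in> sparse a l.
        (\<integral>\<^sup>+ Q. enn_powr (ennreal (logw \<alpha> Q * measure lebesgue Q powr (1/p - 1))
                  * (\<integral>\<^sup>+ x\<in>Q. ennreal \<bar>f x\<bar> \<partial>lebesgue)) q \<partial>count_space S)) (1/q)"

definition SR_space :: "real \<Rightarrow> real \<Rightarrow> real \<Rightarrow> real^'n \<Rightarrow> real \<Rightarrow> (real^'n \<Rightarrow> real) set" where
  "SR_space p q \<alpha> a l = {f. set_integrable lebesgue (cube a l) f \<and> SR_norm p q \<alpha> a l f < \<infinity>}"

definition Mmax :: "real \<Rightarrow> real \<Rightarrow> real^'n \<Rightarrow> real \<Rightarrow> (real^'n \<Rightarrow> real) \<Rightarrow> real^'n \<Rightarrow> ennreal" where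
  "Mmax lam \<alpha> a l f x = (SUP Q \<in> {Q \<in> dyadic a l. x \<in> Q}.
      ennreal (measure lebesgue Q powr (lam / real CARD('n) - 1) * logw \<alpha> Q)
        * (\<integral>\<^sup>+ y\<in>Q. ennreal \<bar>f y\<bar> \<partial>lebesgue))"

definition M_Lq_norm :: "real \<Rightarrow> real \<Rightarrow> real \<Rightarrow> real^'n \<Rightarrow> real \<Rightarrow> (real^'n \<Rightarrow> real) \<Rightarrow> ennreal" where
  "M_Lq_norm lam \<alpha> q a l f =
     enn_powr (\<integral>\<^sup>+ x\<in>cube a l. enn_powr (Mmax lam \<alpha> a l f x) q \<partial>lebesgue) (1/q)"

definition M_Lq_space :: "real \<Rightarrow> real \<Rightarrow> real \<Rightarrow> real^'n \<Rightarrow> real \<Rightarrow> (real^'n \<Rightarrow> real) set" where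
  "M_Lq_space lam \<alpha> q a l = {f. set_integrable lebesgue (cube a l) f \<and>
      Mmax lam \<alpha> a l f \<in> borel_measurable (lebesgue_on (cube a l)) \<and>
      M_Lq_norm lam \<alpha> q a l f < \<infinity>}"

end

theory Submission
  imports Defs
begin

text \<open>Both sides are built from one set function on dyadic cubes,
  g(Q) = |Q|^(lambda/n - 1) w(Q) int_Q |f| with w the logarithmic weight. Since
  |Q|^(1/p - 1) = |Q|^(1/q) |Q|^(lambda/n - 1), the SR norm is the supremum over sparse families S
  of (sum_S g(Q)^q |Q|)^(1/q), and the other norm is the L^q norm of the dyadic maximal function
  Mg(x) = sup {g(Q) : x in Q}. A sparse sum is at most twice the integral of (Mg)^q, because
  g(Q) <= Mg on the set E_Q, which carries half of |Q|. Conversely, for bounded g take the level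
  sets Omega_i = {Mg > 4B 4^-i} and their maximal dyadic cubes. The maximal cubes whose half-open
  part meets Omega_(i-1) in at most half its measure form, over all i, one sparse family; the
  other maximal cubes have total measure at most 2 |Omega_(i-1)|, and for q >= 1 this error is
  absorbed by the geometric decay of the levels. Truncating g and monotone convergence remove the
  boundedness assumption.\<close>

lemma enn_powr_ennreal: "0 \<le> x \<Longrightarrow> enn_powr (ennreal x) r = ennreal (x powr r)"
  by (simp add: enn_powr_def)

lemma enn_powr_top [simp]: "enn_powr top r = top"
  by (simp add: enn_powr_def)

lemma enn_powr_mono:
  assumes "x \<le> y" "0 \<le> r"
  shows "enn_powr x r \<le> enn_powr y r"
proof (cases "y = top")
  case False
  then obtain x' y' where "x = ennreal x'" "y = ennreal y'" "0 \<le> x'" "x' \<le> y'"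
    using assms(1) by (cases x; cases y) (auto simp: top_unique)
  then show ?thesis
    using assms(2) by (simp add: enn_powr_ennreal powr_mono2)
qed simp

lemma enn_powr_cmult:
  assumes "0 < c"
  shows "enn_powr (ennreal c * x) r = ennreal (c powr r) * enn_powr x r"
proof (cases "x = top")
  case False
  then obtain x' where x: "x = ennreal x'" "0 \<le> x'"
    by (cases x) auto
  then have "enn_powr (ennreal c * x) r = ennreal ((c * x') powr r)"
    using assms by (simp add: enn_powr_ennreal flip: ennreal_mult)
  also have "\<dots> = ennreal (c powr r) * enn_powr x r"
    using x assms by (simp add: powr_mult ennreal_mult enn_powr_ennreal)
  finally show ?thesis .
qed (use assms in \<open>simp add: ennreal_mult_top\<close>)

lemma measurable_enn_powr [measurable (raw)]:
  assumes "f \<in> borel_measurable M"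
  shows "(\<lambda>x. enn_powr (f x) r) \<in> borel_measurable M"
  unfolding enn_powr_def using assms by measurable

lemma nn_integral_count_space_subset:
  assumes "A \<subseteq> B"
  shows "(\<integral>\<^sup>+x. f x \<partial>count_space A) = (\<integral>\<^sup>+x. f x * indicator A x \<partial>count_space B)"
proof -
  have "(\<integral>\<^sup>+x. f x * indicator A x \<partial>count_space B) = (\<integral>\<^sup>+x. f x * indicator A x * indicator B x \<partial>count_space UNIV)"
    by (simp add: nn_integral_count_space_indicator)
  also have "\<dots> = (\<integral>\<^sup>+x. f x * indicator A x \<partial>count_space UNIV)"
    using assms by (intro nn_integral_cong) (auto simp: indicator_def)
  finally show ?thesis
    by (simp add: nn_integral_count_space_indicator)
qed

lemma nn_integral_count_space_Diff:
  assumes "B \<subseteq> A"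
  shows "(\<integral>\<^sup>+x. f x \<partial>count_space A) = (\<integral>\<^sup>+x. f x \<partial>count_space B) + (\<integral>\<^sup>+x. f x \<partial>count_space (A - B))"
proof -
  have "(\<integral>\<^sup>+x. f x \<partial>count_space A)
      = (\<integral>\<^sup>+x. f x * indicator B x + f x * indicator (A - B) x \<partial>count_space A)"
    using assms by (intro nn_integral_cong) (auto simp: indicator_def)
  also have "\<dots> = (\<integral>\<^sup>+x. f x * indicator B x \<partial>count_space A) + (\<integral>\<^sup>+x. f x * indicator (A - B) x \<partial>count_space A)"
    by (rule nn_integral_add) auto
  also have "(\<integral>\<^sup>+x. f x * indicator B x \<partial>count_space A) = (\<integral>\<^sup>+x. f x \<partial>count_space B)"
    using assms by (rule nn_integral_count_space_subset[symmetric])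
  also have "(\<integral>\<^sup>+x. f x * indicator (A - B) x \<partial>count_space A) = (\<integral>\<^sup>+x. f x \<partial>count_space (A - B))"
    by (rule nn_integral_count_space_subset[symmetric]) auto
  finally show ?thesis .
qed

lemma emeasure_UN_countable_le:
  assumes "countable I" "\<And>i. i \<in> I \<Longrightarrow> X i \<in> sets M"
  shows "emeasure M (\<Union>i\<in>I. X i) \<le> (\<integral>\<^sup>+i. emeasure M (X i) \<partial>count_space I)"
proof -
  have "indicator (\<Union>i\<in>I. X i) x \<le> (\<integral>\<^sup>+i. indicator (X i) x \<partial>count_space I)" for x
  proof (cases "x \<in> (\<Union>i\<in>I. X i)")
    case True
    then obtain i where i: "i \<in> I" "x \<in> X i" by blast
    have "(1::ennreal) = (\<integral>\<^sup>+j. indicator {i} j \<partial>count_space I)"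
      using i by (simp add: nn_integral_indicator)
    also have "\<dots> \<le> (\<integral>\<^sup>+j. indicator (X j) x \<partial>count_space I)"
      using i by (intro nn_integral_mono) (auto simp: indicator_def)
    finally show ?thesis
      using True by simp
  qed simp
  then have "emeasure M (\<Union>i\<in>I. X i) \<le> (\<integral>\<^sup>+x. (\<integral>\<^sup>+i. indicator (X i) x \<partial>count_space I) \<partial>M)"
    using assms by (subst nn_integral_indicator[symmetric]) (auto intro!: nn_integral_mono)
  also have "\<dots> = (\<integral>\<^sup>+i. emeasure M (X i) \<partial>count_space I)"
    using assms by (subst nn_integral_count_space_nn_integral) (auto intro!: nn_integral_cong)
  finally show ?thesis .
qed

lemma nn_integral_count_space_disjoint_le:
  assumes "countable I" "\<And>i. i \<in> I \<Longrightarrow> E i \<in> sets M" "\<And>i. i \<in> I \<Longrightarrow> E i \<subseteq> A"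
    and "disjoint_family_on E I" "f \<in> borel_measurable M"
  shows "(\<integral>\<^sup>+i. (\<integral>\<^sup>+x\<in>E i. f x \<partial>M) \<partial>count_space I) \<le> (\<integral>\<^sup>+x\<in>A. f x \<partial>M)"
proof -
  have pointwise: "(\<integral>\<^sup>+i. f x * indicator (E i) x \<partial>count_space I) \<le> f x * indicator A x" for x
  proof (cases "\<exists>i\<in>I. x \<in> E i")
    case True
    then obtain i where i: "i \<in> I" "x \<in> E i" by blast
    have "(\<integral>\<^sup>+j. f x * indicator (E j) x \<partial>count_space I) = (\<integral>\<^sup>+j. f x * indicator {i} j \<partial>count_space I)"
      using i assms(4) by (intro nn_integral_cong) (auto simp: indicator_def disjoint_family_on_def)
    also have "\<dots> = f x"
      using i by (simp add: nn_integral_cmult_indicator)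
    finally show ?thesis
      using i assms(3) by (auto simp: indicator_def)
  next
    case False
    then have "(\<integral>\<^sup>+i. f x * indicator (E i) x \<partial>count_space I) = (\<integral>\<^sup>+i. 0 \<partial>count_space I)"
      by (intro nn_integral_cong) (auto simp: indicator_def)
    then show ?thesis
      by simp
  qed
  have "(\<integral>\<^sup>+i. (\<integral>\<^sup>+x\<in>E i. f x \<partial>M) \<partial>count_space I)
      = (\<integral>\<^sup>+x. (\<integral>\<^sup>+i. f x * indicator (E i) x \<partial>count_space I) \<partial>M)"
    using assms by (intro nn_integral_count_space_nn_integral[symmetric]) auto
  also have "\<dots> \<le> (\<integral>\<^sup>+x\<in>A. f x \<partial>M)"
    by (intro nn_integral_mono pointwise)
  finally show ?thesis .
qed

lemma ennreal_absorb_half: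
  assumes "(t::ennreal) \<noteq> top" "t \<le> s + ennreal (1/2) * t"
  shows "t \<le> 2 * s"
proof (cases "s = top")
  case False
  obtain t' s' where ts: "t = ennreal t'" "s = ennreal s'" "0 \<le> t'" "0 \<le> s'"
    using assms(1) False by (cases t; cases s) auto
  have "ennreal (1/2) * t = ennreal (t' / 2)"
    unfolding ts(1) using ts(3) by (subst ennreal_mult[symmetric]) auto
  then have "ennreal t' \<le> ennreal (s' + t' / 2)"
    using assms(2) ts by (simp add: ennreal_plus)
  then have "t' \<le> s' + t' / 2"
    using ts(3,4) by (subst (asm) ennreal_le_iff) auto
  then have "ennreal t' \<le> ennreal (2 * s')"
    by (intro ennreal_leI) simp
  then show ?thesis
    using ts by (simp add: ennreal_mult)
qed (simp add: ennreal_mult_top)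

lemma SUP_enn_powr_min_nat:
  assumes "1 \<le> q"
  shows "(SUP N. enn_powr (min y (ennreal (real N + 1))) q) = enn_powr y q"
proof (rule antisym)
  show "(SUP N. enn_powr (min y (ennreal (real N + 1))) q) \<le> enn_powr y q"
    using assms by (intro SUP_least enn_powr_mono) auto
  show "enn_powr y q \<le> (SUP N. enn_powr (min y (ennreal (real N + 1))) q)"
  proof (cases "y = top")
    case True
    have "of_nat N \<le> enn_powr (min y (ennreal (real N + 1))) q" for N
    proof -
      have "min y (ennreal (real N + 1)) = ennreal (real N + 1)"
        unfolding True by (rule min.absorb2[OF top_greatest])
      then have "enn_powr (min y (ennreal (real N + 1))) q = ennreal ((real N + 1) powr q)"
        by (simp only: enn_powr_ennreal)
      moreover have "real N \<le> (real N + 1) powr q"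
        using powr_mono[of 1 q "real N + 1"] assms by simp
      ultimately show ?thesis
        by (simp only: ennreal_of_nat_eq_real_of_nat ennreal_leI)
    qed
    then have "(SUP N. (of_nat N :: ennreal)) \<le> (SUP N. enn_powr (min y (ennreal (real N + 1))) q)"
      by (intro SUP_mono) auto
    then show ?thesis
      using True by (simp add: ennreal_SUP_of_nat_eq_top)
  next
    case False
    then obtain m where m: "y = ennreal m" "0 \<le> m"
      by (cases y) auto
    have "y \<le> ennreal (real (nat \<lceil>m\<rceil>) + 1)"
      unfolding m(1) by (intro ennreal_leI) linarith
    then show ?thesis
      by (intro SUP_upper2[of "nat \<lceil>m\<rceil>"]) (simp_all add: min.absorb1)
  qed
qed

lemma cube_eq_cbox: "cube c s = cbox c (\<chi> i. c$i + s)"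
  by (auto simp: cube_def mem_box_cart)

lemma cube_lmeasurable [simp]: "cube c s \<in> lmeasurable"
  by (simp add: cube_eq_cbox)

lemma sets_cube [measurable]: "cube c s \<in> sets lebesgue"
  by (simp add: cube_eq_cbox)

lemma measure_cube:
  fixes c :: "real^'n"
  assumes "0 \<le> s"
  shows "measure lebesgue (cube c s) = s ^ CARD('n)"
proof -
  have "cbox c (\<chi> i. c$i + s) \<noteq> {}"
    using assms by (auto simp: interval_eq_empty_cart)
  then show ?thesis
    by (simp add: cube_eq_cbox content_cbox_cart)
qed

lemma cube_subset_imp_side_le:
  assumes "cube c s \<subseteq> cube c' s'" "0 \<le> s"
  shows "s \<le> s'"
proof -
  have "c \<in> cube c s" "(\<chi> i. c$i + s) \<in> cube c s"
    using assms(2) by (auto simp: cube_def)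
  then have "c \<in> cube c' s'" "(\<chi> i. c$i + s) \<in> cube c' s'"
    using assms(1) by blast+
  then have "c'$i \<le> c$i" "c$i + s \<le> c'$i + s'" for i
    by (auto simp: cube_def)
  from this[of undefined] show ?thesis
    by linarith
qed

text \<open>Removing the upper faces makes distinct dyadic cubes of one generation disjoint. The
  definition refers only to the set \<open>Q\<close>, so it needs no choice of corner and side length.\<close>
definition half_open :: "(real^'n) set \<Rightarrow> (real^'n) set" where
  "half_open Q = {x\<in>Q. \<forall>i. x$i < Sup ((\<lambda>y. y$i) ` Q)}"

lemma half_open_subset: "half_open Q \<subseteq> Q"
  by (auto simp: half_open_def)

lemma half_open_cube:
  assumes "0 \<le> s"
  shows "half_open (cube c s) = {x. \<forall>i. c$i \<le> x$i \<and> x$i < c$i + s}"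
proof -
  have "Sup ((\<lambda>y. y$i) ` cube c s) = c$i + s" for i
  proof (rule cSup_eq_maximum)
    show "c$i + s \<in> (\<lambda>y. y$i) ` cube c s"
      using assms by (intro image_eqI[where x="\<chi> i. c$i + s"]) (auto simp: cube_def)
  qed (auto simp: cube_def)
  then show ?thesis
    by (auto simp: half_open_def cube_def less_imp_le)
qed

lemma cube_diff_half_open_null:
  assumes "0 \<le> s"
  shows "cube c s - half_open (cube c s) \<in> null_sets lebesgue"
proof -
  have "box c (\<chi> i. c$i + s) \<subseteq> half_open (cube c s)"
    using assms by (auto simp: half_open_cube mem_box_cart less_imp_le)
  then have "cube c s - half_open (cube c s) \<subseteq> cbox c (\<chi> i. c$i + s) - box c (\<chi> i. c$i + s)"
    by (auto simp: cube_eq_cbox)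
  then show ?thesis
    unfolding null_sets_completion_iff2 using null_sets_cbox_Diff_box by blast
qed

lemma
  assumes "0 \<le> s"
  shows sets_half_open_cube: "half_open (cube c s) \<in> sets lebesgue"
    and measure_half_open_cube: "measure lebesgue (half_open (cube c s)) = measure lebesgue (cube c s)"
proof -
  have eq: "half_open (cube c s) = cube c s - (cube c s - half_open (cube c s))"
    using half_open_subset by blast
  show "half_open (cube c s) \<in> sets lebesgue"
    using cube_diff_half_open_null[OF assms] by (subst eq) (intro sets.Diff sets_cube null_setsD2)
  show "measure lebesgue (half_open (cube c s)) = measure lebesgue (cube c s)"
    by (subst eq) (intro measure_Diff_null_set sets_cube cube_diff_half_open_null assms)
qed

section \<open>Dyadic cubes and sparse families\<close>

definition dyadic_cube :: "real^'n \<Rightarrow> real \<Rightarrow> nat \<Rightarrow> ('n \<Rightarrow> nat) \<Rightarrow> (real^'n) set" where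
  "dyadic_cube a l k j = cube (a + (l / 2^k) *\<^sub>R (\<chi> i. real (j i))) (l / 2^k)"

lemma mem_dyadic_iff: "Q \<in> dyadic a l \<longleftrightarrow> (\<exists>k j. (\<forall>i. j i < 2^k) \<and> Q = dyadic_cube a l k j)"
  by (auto simp: dyadic_def dyadic_cube_def)

lemma dyadicE:
  assumes "Q \<in> dyadic a l"
  obtains k j where "\<forall>i. j i < 2^k" "Q = dyadic_cube a l k j"
  using assms by (auto simp: mem_dyadic_iff)

lemma countable_dyadic: "countable (dyadic a l)"
proof -
  have "dyadic a l \<subseteq> (\<lambda>(k, j). dyadic_cube a l k j) ` UNIV"
    by (force simp: mem_dyadic_iff)
  then show ?thesis
    by (rule countable_subset) simp
qed

lemma dyadic_cube_subset:
  assumes "0 < l" "\<forall>i. j i < 2^k"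
  shows "dyadic_cube a l k j \<subseteq> cube a l"
proof
  fix x assume x: "x \<in> dyadic_cube a l k j"
  have "a$i \<le> x$i \<and> x$i \<le> a$i + l" for i
  proof -
    define s where "s = l / 2^k"
    have "0 < s" using assms(1) by (simp add: s_def)
    have "j i + 1 \<le> (2::nat)^k"
      using assms(2) by (simp add: Suc_le_eq)
    then have "real (j i + 1) \<le> real ((2::nat)^k)"
      by (simp only: of_nat_le_iff)
    then have "real (j i) + 1 \<le> 2^k"
      by simp
    then have "s * (real (j i) + 1) \<le> s * 2^k"
      using \<open>0 < s\<close> by (intro mult_left_mono) auto
    also have "s * 2^k = l"
      by (simp add: s_def)
    finally have "s * real (j i) + s \<le> l"
      by (simp add: algebra_simps)
    moreover have "a$i + s * real (j i) \<le> x$i" "x$i \<le> a$i + s * real (j i) + s"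
      using x by (simp_all add: dyadic_cube_def cube_def s_def)
    moreover have "0 \<le> s * real (j i)" using \<open>0 < s\<close> by simp
    ultimately show ?thesis by linarith
  qed
  then show "x \<in> cube a l"
    by (simp add: cube_def)
qed

lemma
  assumes "0 < l" "Q \<in> dyadic a l"
  shows dyadic_subset_cube: "Q \<subseteq> cube a l"
    and measure_dyadic_pos: "0 < measure lebesgue Q"
    and sets_half_open_dyadic: "half_open Q \<in> sets lebesgue"
    and measure_half_open_dyadic: "measure lebesgue (half_open Q) = measure lebesgue Q"
proof -
  obtain k j where kj: "\<forall>i. j i < 2^k" "Q = dyadic_cube a l k j"
    using assms(2) by (rule dyadicE)
  have s: "0 < l / 2^k" using assms(1) by simp
  show "Q \<subseteq> cube a l" using dyadic_cube_subset[OF assms(1) kj(1)] kj(2) by simp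
  show "0 < measure lebesgue Q" using s by (simp add: kj dyadic_cube_def measure_cube)
  show "half_open Q \<in> sets lebesgue"
    using s by (simp add: kj dyadic_cube_def sets_half_open_cube)
  show "measure lebesgue (half_open Q) = measure lebesgue Q"
    using s by (simp add: kj dyadic_cube_def measure_half_open_cube)
qed

lemma lmeasurable_dyadic: "Q \<in> dyadic a l \<Longrightarrow> Q \<in> lmeasurable"
  by (auto elim!: dyadicE simp: dyadic_cube_def)

lemma sets_dyadic [measurable (raw)]: "Q \<in> dyadic a l \<Longrightarrow> Q \<in> sets lebesgue"
  using lmeasurable_dyadic by blast

lemma emeasure_dyadic: "Q \<in> dyadic a l \<Longrightarrow> emeasure lebesgue Q = ennreal (measure lebesgue Q)"
  using lmeasurable_dyadic by (rule emeasure_eq_measure2)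

lemma emeasure_dyadic_le_twice:
  assumes "Q \<in> dyadic a l" "X \<in> sets lebesgue" "X \<subseteq> Q"
    and "measure lebesgue Q \<le> 2 * measure lebesgue X"
  shows "emeasure lebesgue Q \<le> 2 * emeasure lebesgue X"
proof -
  have "X \<in> lmeasurable"
    using assms(1-3) by (blast intro: fmeasurableI2 lmeasurable_dyadic)
  have "emeasure lebesgue Q = ennreal (measure lebesgue Q)"
    using assms(1) by (rule emeasure_dyadic)
  also have "\<dots> \<le> ennreal (2 * measure lebesgue X)"
    using assms(4) by (rule ennreal_leI)
  also have "\<dots> = 2 * emeasure lebesgue X"
    using \<open>X \<in> lmeasurable\<close> by (simp add: emeasure_eq_measure2 ennreal_mult')
  finally show ?thesis .
qed

lemma dyadic_index_nested:
  fixes s x :: real and j j' d :: nat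
  assumes "0 < s" "s * (2^d * j) \<le> x" "x < s * (2^d * (j + 1))" "s * j' \<le> x" "x < s * (j' + 1)"
  shows "2^d * j \<le> j'" "j' + 1 \<le> 2^d * (j + 1)"
proof -
  have "s * (2^d * j) < s * (j' + 1)" "s * j' < s * (2^d * (j + 1))"
    using assms by linarith+
  then have "real (2^d * j) < real (j' + 1)" "real j' < real (2^d * (j + 1))"
    using assms(1) by (simp_all add: mult_less_cancel_left_pos)
  then show "2^d * j \<le> j'" "j' + 1 \<le> 2^d * (j + 1)"
    by (simp_all only: of_nat_less_iff)
qed

lemma half_open_dyadic_cube:
  assumes "0 \<le> l"
  shows "half_open (dyadic_cube a l k j)
    = {x. \<forall>i. a$i + l / 2^k * j i \<le> x$i \<and> x$i < a$i + l / 2^k * j i + l / 2^k}"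
  using assms by (simp add: dyadic_cube_def half_open_cube)

lemma dyadic_cube_nested:
  assumes "0 < l" "k \<le> k'"
    and x: "x \<in> half_open (dyadic_cube a l k j)" "x \<in> half_open (dyadic_cube a l k' j')"
  shows "dyadic_cube a l k' j' \<subseteq> dyadic_cube a l k j"
proof
  define s d where "s = l / 2^k'" and "d = k' - k"
  have "0 < s" using assms(1) by (simp add: s_def)
  have coarse: "l / 2^k = s * 2^d"
    using assms(2) by (simp add: s_def d_def field_simps flip: power_add)
  fix y assume y: "y \<in> dyadic_cube a l k' j'"
  have "a$i + l / 2^k * j i \<le> y$i \<and> y$i \<le> a$i + l / 2^k * j i + l / 2^k" for i
  proof -
    have "a$i + s * 2^d * j i \<le> x$i" "x$i < a$i + s * 2^d * j i + s * 2^d"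
      "a$i + s * j' i \<le> x$i" "x$i < a$i + s * j' i + s"
      using x assms(1) by (simp_all add: half_open_dyadic_cube coarse flip: s_def)
    then have "s * (2^d * j i) \<le> x$i - a$i" "x$i - a$i < s * (2^d * (j i + 1))"
      "s * j' i \<le> x$i - a$i" "x$i - a$i < s * (j' i + 1)"
      by (simp_all add: algebra_simps)
    then have "real (2^d * j i) \<le> j' i" "real (j' i + 1) \<le> 2^d * (j i + 1)"
      using dyadic_index_nested[OF \<open>0 < s\<close>] by (simp_all only: of_nat_le_iff)
    then have "s * (2^d * j i) \<le> s * j' i" "s * (j' i + 1) \<le> s * (2^d * (j i + 1))"
      using \<open>0 < s\<close> by (simp_all add: mult_left_mono)
    moreover have "a$i + s * j' i \<le> y$i" "y$i \<le> a$i + s * j' i + s"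
      using y by (simp_all add: dyadic_cube_def cube_def s_def mult.commute)
    ultimately show ?thesis
      by (simp add: coarse algebra_simps)
  qed
  then show "y \<in> dyadic_cube a l k j"
    by (simp add: dyadic_cube_def cube_def mult.commute)
qed

lemma dyadic_half_open_meet_nested:
  assumes "0 < l" "Q \<in> dyadic a l" "Q' \<in> dyadic a l" "x \<in> half_open Q" "x \<in> half_open Q'"
  shows "Q \<subseteq> Q' \<or> Q' \<subseteq> Q"
proof -
  obtain k j k' j' where "Q = dyadic_cube a l k j" "Q' = dyadic_cube a l k' j'"
    using assms(2,3) by (auto elim!: dyadicE)
  then show ?thesis
    using assms(4,5) dyadic_cube_nested[OF assms(1), of k k' x a j j'] dyadic_cube_nested[OF assms(1), of k' k x a j' j]
    by (cases "k \<le> k'") auto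
qed

lemma finite_dyadic_ancestors:
  fixes j :: "'n::finite \<Rightarrow> nat"
  assumes "0 < l"
  shows "finite {Q\<in>dyadic a l. dyadic_cube a l k j \<subseteq> Q}"
proof (rule finite_subset)
  let ?J = "{j' :: 'n \<Rightarrow> nat. \<forall>i. j' i < 2^k}"
  show "{Q\<in>dyadic a l. dyadic_cube a l k j \<subseteq> Q} \<subseteq> (\<lambda>(k', j'). dyadic_cube a l k' j') ` ({..k} \<times> ?J)"
  proof
    fix Q assume "Q \<in> {Q\<in>dyadic a l. dyadic_cube a l k j \<subseteq> Q}"
    then obtain k' j' where Q: "\<forall>i. j' i < 2^k'" "Q = dyadic_cube a l k' j'"
      and sub: "dyadic_cube a l k j \<subseteq> dyadic_cube a l k' j'"
      by (auto elim!: dyadicE)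
    have "l / 2^k \<le> l / 2^k'"
      using cube_subset_imp_side_le[OF sub[unfolded dyadic_cube_def]] assms by simp
    moreover have "l / 2^k' < l / 2^k" if "k < k'"
      using assms that by (intro divide_strict_left_mono) auto
    ultimately have "k' \<le> k"
      by fastforce
    then have "\<forall>i. j' i < 2^k"
      using Q(1) by (meson order_less_le_trans one_le_numeral power_increasing)
    with Q(2) \<open>k' \<le> k\<close> show "Q \<in> (\<lambda>(k', j'). dyadic_cube a l k' j') ` ({..k} \<times> ?J)"
      by force
  qed
  have "?J = PiE UNIV (\<lambda>_. {..<2^k})"
    by (auto simp: PiE_UNIV_domain)
  then have "finite ?J"
    by (simp add: finite_PiE)
  then show "finite ((\<lambda>(k', j'). dyadic_cube a l k' j') ` ({..k} \<times> ?J))"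
    by simp
qed

lemma dyadic_maximal_exists:
  assumes "0 < l" "Q \<in> dyadic a l" "P Q"
  obtains M where "M \<in> dyadic a l" "Q \<subseteq> M" "P M"
    "\<And>Q'. Q' \<in> dyadic a l \<Longrightarrow> M \<subseteq> Q' \<Longrightarrow> P Q' \<Longrightarrow> Q' = M"
proof -
  define A where "A = {Q'\<in>dyadic a l. Q \<subseteq> Q' \<and> P Q'}"
  obtain k j where "Q = dyadic_cube a l k j"
    using assms(2) by (rule dyadicE)
  then have "finite A"
    unfolding A_def by (intro finite_subset[OF _ finite_dyadic_ancestors[OF assms(1), of a k j]]) auto
  moreover have "Q \<in> A"
    using assms(2,3) by (simp add: A_def)
  ultimately obtain M where "M \<in> A" "\<And>Q'. Q' \<in> A \<Longrightarrow> M \<subseteq> Q' \<Longrightarrow> M = Q'"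
    using finite_has_maximal by (metis empty_iff)
  then show thesis
    by (intro that) (auto simp: A_def)
qed

lemma sparseE:
  assumes "S \<in> sparse a l"
  obtains E where "S \<subseteq> dyadic a l" "countable S"
    "\<And>Q. Q \<in> S \<Longrightarrow> E Q \<in> sets lebesgue" "\<And>Q. Q \<in> S \<Longrightarrow> E Q \<subseteq> Q"
    "\<And>Q. Q \<in> S \<Longrightarrow> measure lebesgue Q \<le> 2 * measure lebesgue (E Q)"
    "disjoint_family_on E S"
proof -
  from assms obtain E where "S \<subseteq> dyadic a l" "countable S"
    and "\<forall>Q\<in>S. E Q \<in> sets lebesgue \<and> E Q \<subseteq> Q \<and> measure lebesgue (E Q) \<ge> measure lebesgue Q / 2"
    and "\<forall>Q\<in>S. \<forall>Q'\<in>S. Q \<noteq> Q' \<longrightarrow> E Q \<inter> E Q' = {}"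
    by (auto simp: sparse_def)
  then show thesis
    by (intro that[of E]) (auto simp: disjoint_family_on_def)
qed

lemma sparseI:
  assumes "S \<subseteq> dyadic a l" "countable S"
    "\<And>Q. Q \<in> S \<Longrightarrow> E Q \<in> sets lebesgue" "\<And>Q. Q \<in> S \<Longrightarrow> E Q \<subseteq> Q"
    "\<And>Q. Q \<in> S \<Longrightarrow> measure lebesgue Q \<le> 2 * measure lebesgue (E Q)"
    "disjoint_family_on E S"
  shows "S \<in> sparse a l"
proof -
  have "\<forall>Q\<in>S. E Q \<in> sets lebesgue \<and> E Q \<subseteq> Q \<and> measure lebesgue (E Q) \<ge> measure lebesgue Q / 2"
    using assms(3-5) by fastforce
  moreover have "\<forall>Q\<in>S. \<forall>Q'\<in>S. Q \<noteq> Q' \<longrightarrow> E Q \<inter> E Q' = {}"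
    using assms(6) by (auto simp: disjoint_family_on_def)
  ultimately show ?thesis
    using assms(1,2) unfolding sparse_def by blast
qed

section \<open>The dyadic maximal function of a set function\<close>

definition dyadic_max :: "real^'n \<Rightarrow> real \<Rightarrow> ((real^'n) set \<Rightarrow> ennreal) \<Rightarrow> real^'n \<Rightarrow> ennreal" where
  "dyadic_max a l g x = (SUP Q\<in>{Q\<in>dyadic a l. x \<in> Q}. g Q)"

lemma dyadic_max_upper: "Q \<in> dyadic a l \<Longrightarrow> x \<in> Q \<Longrightarrow> g Q \<le> dyadic_max a l g x"
  unfolding dyadic_max_def by (rule SUP_upper) auto

lemma dyadic_max_min_const: "dyadic_max a l (\<lambda>Q. min (g Q) c) x = min (dyadic_max a l g x) c"
  by (simp add: dyadic_max_def inf_min[symmetric] SUP_inf)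

lemma borel_measurable_dyadic_max [measurable]: "dyadic_max a l g \<in> borel_measurable lebesgue"
proof -
  have "dyadic_max a l g = (\<lambda>x. SUP Q\<in>dyadic a l. g Q * indicator Q x)"
    unfolding dyadic_max_def
    by (intro ext antisym SUP_least) (auto intro: SUP_upper2 simp: indicator_def)
  also have "\<dots> \<in> borel_measurable lebesgue"
    by (intro borel_measurable_SUP countable_dyadic) measurable
  finally show ?thesis .
qed

lemma sparse_sum_le_dyadic_max_integral:
  assumes "0 < l" "0 \<le> q" "S \<in> sparse a l"
  shows "(\<integral>\<^sup>+Q. enn_powr (g Q) q * emeasure lebesgue Q \<partial>count_space S)
    \<le> 2 * (\<integral>\<^sup>+x\<in>cube a l. enn_powr (dyadic_max a l g x) q \<partial>lebesgue)"
proof -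
  obtain E where S: "S \<subseteq> dyadic a l" "countable S"
    and E: "\<And>Q. Q \<in> S \<Longrightarrow> E Q \<in> sets lebesgue" "\<And>Q. Q \<in> S \<Longrightarrow> E Q \<subseteq> Q"
      "\<And>Q. Q \<in> S \<Longrightarrow> measure lebesgue Q \<le> 2 * measure lebesgue (E Q)"
    and disj: "disjoint_family_on E S"
    using sparseE[OF assms(3)] by metis
  let ?F = "\<lambda>x. enn_powr (dyadic_max a l g x) q"
  have "enn_powr (g Q) q * emeasure lebesgue Q \<le> 2 * (\<integral>\<^sup>+x\<in>E Q. ?F x \<partial>lebesgue)" if Q: "Q \<in> S" for Q
  proof -
    have "emeasure lebesgue Q \<le> 2 * emeasure lebesgue (E Q)"
      using Q S(1) E by (intro emeasure_dyadic_le_twice) auto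
    then have "enn_powr (g Q) q * emeasure lebesgue Q \<le> 2 * (enn_powr (g Q) q * emeasure lebesgue (E Q))"
      by (metis mult_left_mono mult.left_commute zero_le)
    also have "enn_powr (g Q) q * emeasure lebesgue (E Q) = (\<integral>\<^sup>+x\<in>E Q. enn_powr (g Q) q \<partial>lebesgue)"
      using E(1)[OF Q] by (simp add: nn_integral_cmult_indicator)
    also have "\<dots> \<le> (\<integral>\<^sup>+x\<in>E Q. ?F x \<partial>lebesgue)"
      using Q S(1) E(2) assms(2)
      by (intro nn_integral_mono) (auto simp: indicator_def intro!: enn_powr_mono dyadic_max_upper)
    finally show ?thesis
      by (simp add: mult_left_mono)
  qed
  then have "(\<integral>\<^sup>+Q. enn_powr (g Q) q * emeasure lebesgue Q \<partial>count_space S)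
      \<le> 2 * (\<integral>\<^sup>+Q. (\<integral>\<^sup>+x\<in>E Q. ?F x \<partial>lebesgue) \<partial>count_space S)"
    by (subst nn_integral_cmult[symmetric]) (auto intro: nn_integral_mono)
  also have "\<dots> \<le> 2 * (\<integral>\<^sup>+x\<in>cube a l. ?F x \<partial>lebesgue)"
    using S E(1,2) disj dyadic_subset_cube[OF assms(1)]
    by (intro mult_left_mono nn_integral_count_space_disjoint_le) (auto, blast)
  finally show ?thesis .
qed

section \<open>Level sets of the maximal function\<close>

locale dyadic_level_sets =
  fixes a :: "real^'n" and l :: real and g :: "(real^'n) set \<Rightarrow> ennreal" and B q :: real
  assumes l_pos: "0 < l" and B_pos: "0 < B" and g_le_B: "\<And>Q. g Q \<le> ennreal B" and q_ge_1: "1 \<le> q"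
begin

definition level :: "nat \<Rightarrow> real" where
  "level i = 4 * B * (1/4)^i"

definition level_set :: "nat \<Rightarrow> (real^'n) set" where
  "level_set i = \<Union>{Q\<in>dyadic a l. ennreal (level i) < g Q}"

definition maximal_cubes :: "nat \<Rightarrow> (real^'n) set set" where
  "maximal_cubes i = {Q\<in>dyadic a l. ennreal (level i) < g Q \<and>
     (\<forall>Q'\<in>dyadic a l. Q \<subseteq> Q' \<and> ennreal (level i) < g Q' \<longrightarrow> Q' = Q)}"

text \<open>For \<open>i = 0\<close> the truncated \<open>i - 1\<close> is harmless, as \<open>level_set 0 = {}\<close>.\<close>
definition good_cubes :: "nat \<Rightarrow> (real^'n) set set" where
  "good_cubes i = {Q\<in>maximal_cubes i.
     measure lebesgue (half_open Q \<inter> level_set (i - 1)) \<le> measure lebesgue Q / 2}"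

lemma level_pos: "0 < level i"
  using B_pos by (simp add: level_def)

lemma level_Suc: "level i = 4 * level (Suc i)"
  by (simp add: level_def)

lemma level_antimono: "i \<le> i' \<Longrightarrow> level i' \<le> level i"
  unfolding level_def using B_pos by (intro mult_left_mono power_decreasing) auto

lemma level_powr_Suc: "level i powr q = 4 powr q * level (Suc i) powr q"
  using level_pos[of "Suc i"] by (subst level_Suc) (simp add: powr_mult)

lemma level_bracket:
  assumes "0 < m" "m \<le> B"
  obtains i where "level (Suc i) < m" "m \<le> level i"
proof -
  obtain n where "(1/4::real)^n < m / (4 * B)"
    using real_arch_pow_inv[of "m / (4 * B)" "1/4"] assms(1) B_pos by auto
  then have ex: "level n < m"
    using B_pos by (simp add: level_def field_simps)
  define i0 where "i0 = (LEAST i. level i < m)"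
  have i0: "level i0 < m" "\<And>i. level i < m \<Longrightarrow> i0 \<le> i"
    unfolding i0_def using ex by (auto intro: LeastI Least_le)
  have "i0 \<noteq> 0"
  proof
    assume "i0 = 0"
    then show False
      using i0(1) assms(2) B_pos by (simp add: level_def)
  qed
  then obtain i where "i0 = Suc i"
    using not0_implies_Suc by blast
  then show thesis
    using i0 by (intro that[of i]) (auto simp: not_less[symmetric])
qed

lemma level_set_0: "level_set 0 = {}"
proof -
  have "g Q \<le> ennreal (level 0)" for Q
    using g_le_B[of Q] B_pos by (auto simp: level_def intro: order_trans ennreal_leI)
  then show ?thesis
    by (auto simp: level_set_def not_less[symmetric])
qed

lemma level_set_mono: "i \<le> i' \<Longrightarrow> level_set i \<subseteq> level_set i'"
  unfolding level_set_def using level_antimono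
  by (auto intro: le_less_trans[OF ennreal_leI])

lemma level_set_subset_cube: "level_set i \<subseteq> cube a l"
  unfolding level_set_def using dyadic_subset_cube[OF l_pos] by blast

lemma sets_level_set [measurable]: "level_set i \<in> sets lebesgue"
  unfolding level_set_def
  by (intro sets.countable_Union countable_subset[OF _ countable_dyadic[of a l]]) auto

lemma mem_level_set_iff: "x \<in> level_set i \<longleftrightarrow> ennreal (level i) < dyadic_max a l g x"
  unfolding level_set_def dyadic_max_def less_SUP_iff by auto

lemma maximal_cubes_dyadic: "Q \<in> maximal_cubes i \<Longrightarrow> Q \<in> dyadic a l"
  by (simp add: maximal_cubes_def)

lemma countable_maximal_cubes: "countable (maximal_cubes i)"
  using countable_dyadic by (rule countable_subset[rotated]) (auto dest: maximal_cubes_dyadic)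

lemma level_set_eq_Union_maximal_cubes: "level_set i = \<Union>(maximal_cubes i)"
proof
  show "level_set i \<subseteq> \<Union>(maximal_cubes i)"
  proof
    fix x assume "x \<in> level_set i"
    then obtain Q where Q: "Q \<in> dyadic a l" "x \<in> Q" "ennreal (level i) < g Q"
      by (auto simp: level_set_def)
    obtain M where M: "M \<in> dyadic a l" "Q \<subseteq> M" "ennreal (level i) < g M"
      "\<And>Q'. Q' \<in> dyadic a l \<Longrightarrow> M \<subseteq> Q' \<Longrightarrow> ennreal (level i) < g Q' \<Longrightarrow> Q' = M"
      using dyadic_maximal_exists[OF l_pos Q(1), of "\<lambda>Q. ennreal (level i) < g Q"] Q(3) by blast
    then have "M \<in> maximal_cubes i"
      by (auto simp: maximal_cubes_def)
    with M(2) show "x \<in> \<Union>(maximal_cubes i)"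
      using Q(2) by blast
  qed
qed (auto simp: level_set_def maximal_cubes_def)

lemma maximal_cubes_disjoint:
  assumes "Q \<in> maximal_cubes i" "Q' \<in> maximal_cubes i" "Q \<noteq> Q'"
  shows "half_open Q \<inter> half_open Q' = {}"
proof (rule ccontr)
  assume "half_open Q \<inter> half_open Q' \<noteq> {}"
  then have "Q \<subseteq> Q' \<or> Q' \<subseteq> Q"
    using dyadic_half_open_meet_nested[OF l_pos maximal_cubes_dyadic[OF assms(1)] maximal_cubes_dyadic[OF assms(2)]]
    by blast
  then show False
    using assms by (auto simp: maximal_cubes_def)
qed

lemma emeasure_level_set_le:
  "emeasure lebesgue (level_set i) \<le> (\<integral>\<^sup>+Q. emeasure lebesgue Q \<partial>count_space (maximal_cubes i))"
proof -
  have "emeasure lebesgue (level_set i) = emeasure lebesgue (\<Union>Q\<in>maximal_cubes i. Q)"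
    by (simp add: level_set_eq_Union_maximal_cubes)
  also have "\<dots> \<le> (\<integral>\<^sup>+Q. emeasure lebesgue Q \<partial>count_space (maximal_cubes i))"
    using countable_maximal_cubes
    by (rule emeasure_UN_countable_le) (auto dest: maximal_cubes_dyadic)
  finally show ?thesis .
qed

lemma bad_cubes_le:
  "(\<integral>\<^sup>+Q. emeasure lebesgue Q \<partial>count_space (maximal_cubes i - good_cubes i))
    \<le> 2 * emeasure lebesgue (level_set (i - 1))"
proof -
  let ?I = "maximal_cubes i - good_cubes i"
  let ?X = "\<lambda>Q. half_open Q \<inter> level_set (i - 1)"
  have sets_X: "?X Q \<in> sets lebesgue" if "Q \<in> ?I" for Q
    using that by (intro sets.Int sets_level_set sets_half_open_dyadic[OF l_pos]) (auto dest: maximal_cubes_dyadic)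
  have "emeasure lebesgue Q \<le> 2 * emeasure lebesgue (?X Q)" if Q: "Q \<in> ?I" for Q
  proof -
    have "measure lebesgue Q \<le> 2 * measure lebesgue (?X Q)"
      using Q by (auto simp: good_cubes_def)
    then show ?thesis
      using Q sets_X[OF Q] half_open_subset
      by (intro emeasure_dyadic_le_twice) (auto dest: maximal_cubes_dyadic)
  qed
  then have "(\<integral>\<^sup>+Q. emeasure lebesgue Q \<partial>count_space ?I) \<le> 2 * (\<integral>\<^sup>+Q. emeasure lebesgue (?X Q) \<partial>count_space ?I)"
    by (subst nn_integral_cmult[symmetric]) (auto intro: nn_integral_mono)
  also have "(\<integral>\<^sup>+Q. emeasure lebesgue (?X Q) \<partial>count_space ?I) = emeasure lebesgue (\<Union>Q\<in>?I. ?X Q)"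
  proof (rule emeasure_UN_countable[symmetric])
    show "countable ?I"
      using countable_maximal_cubes by (rule countable_subset[rotated]) auto
    show "disjoint_family_on ?X ?I"
      unfolding disjoint_family_on_def using maximal_cubes_disjoint by blast
  qed (use sets_X in auto)
  also have "\<dots> \<le> emeasure lebesgue (level_set (i - 1))"
    by (intro emeasure_mono) auto
  finally show ?thesis
    by (simp add: mult_left_mono)
qed

lemma emeasure_level_set_step:
  "emeasure lebesgue (level_set i)
    \<le> (\<integral>\<^sup>+Q. emeasure lebesgue Q \<partial>count_space (good_cubes i)) + 2 * emeasure lebesgue (level_set (i - 1))"
proof -
  have "emeasure lebesgue (level_set i) \<le> (\<integral>\<^sup>+Q. emeasure lebesgue Q \<partial>count_space (maximal_cubes i))"
    by (rule emeasure_level_set_le)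
  also have "\<dots> = (\<integral>\<^sup>+Q. emeasure lebesgue Q \<partial>count_space (good_cubes i))
      + (\<integral>\<^sup>+Q. emeasure lebesgue Q \<partial>count_space (maximal_cubes i - good_cubes i))"
    by (rule nn_integral_count_space_Diff) (auto simp: good_cubes_def)
  also have "\<dots> \<le> (\<integral>\<^sup>+Q. emeasure lebesgue Q \<partial>count_space (good_cubes i))
      + 2 * emeasure lebesgue (level_set (i - 1))"
    by (intro add_left_mono bad_cubes_le)
  finally show ?thesis .
qed

definition level_sum :: ennreal where
  "level_sum = (\<Sum>i. ennreal (level i powr q) * emeasure lebesgue (level_set i))"

definition good_sum :: ennreal where
  "good_sum = (\<Sum>i. ennreal (level i powr q) * (\<integral>\<^sup>+Q. emeasure lebesgue Q \<partial>count_space (good_cubes i)))"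

lemma level_sum_finite: "level_sum \<noteq> top"
proof -
  define r where "r = (1/4::real) powr q"
  have r: "0 \<le> r" "r < 1"
    using q_ge_1 by (auto simp: r_def powr01_less_one)
  have "level i powr q = (4 * B) powr q * r ^ i" for i
    using B_pos by (simp add: level_def r_def powr_mult powr_realpow' powr_powr mult.commute flip: powr_realpow)
  then have "(\<Sum>i. ennreal (level i powr q)) \<noteq> top"
    using r by (simp add: ennreal_suminf_neq_top summable_mult summable_geometric)
  have "level_sum \<le> (\<Sum>i. ennreal (level i powr q) * emeasure lebesgue (cube a l))"
    unfolding level_sum_def
    by (intro suminf_le mult_left_mono emeasure_mono level_set_subset_cube) (auto intro: summableI)
  also have "\<dots> = (\<Sum>i. ennreal (level i powr q)) * emeasure lebesgue (cube a l)"
    by simp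
  also have "\<dots> < top"
    using \<open>(\<Sum>i. ennreal (level i powr q)) \<noteq> top\<close>
    by (simp add: ennreal_mult_less_top top.not_eq_extremum emeasure_eq_measure2)
  finally show ?thesis
    by simp
qed

text \<open>The recursion for the measures of the level sets telescopes because \<open>q \<ge> 1\<close> makes
  \<open>2 * level (Suc j) powr q \<le> level j powr q / 2\<close>.\<close>
lemma level_sum_le: "level_sum \<le> good_sum + ennreal (1/2) * level_sum"
proof -
  define h where "h i = ennreal (level i powr q) * (2 * emeasure lebesgue (level_set (i - 1)))" for i
  have "level_sum \<le> (\<Sum>i. ennreal (level i powr q) * (\<integral>\<^sup>+Q. emeasure lebesgue Q \<partial>count_space (good_cubes i)) + h i)"
    unfolding level_sum_def h_def distrib_left[symmetric]
    by (intro suminf_le mult_left_mono emeasure_level_set_step) (auto intro: summableI)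
  also have "\<dots> = good_sum + suminf h"
    unfolding good_sum_def by (rule suminf_add[symmetric]) (auto intro: summableI)
  also have "suminf h = (\<Sum>j. h (Suc j))"
    using suminf_offset[of h 1] by (simp add: h_def level_set_0 summableI)
  also have "\<dots> \<le> (\<Sum>j. ennreal (1/2) * (ennreal (level j powr q) * emeasure lebesgue (level_set j)))"
  proof (intro suminf_le summableI)
    fix j
    have "4 \<le> (4::real) powr q"
      using powr_mono[of 1 q 4] q_ge_1 by simp
    then have "2 * level (Suc j) powr q \<le> 1/2 * level j powr q"
      using level_powr_Suc[of j] mult_right_mono[of 4 "4 powr q" "level (Suc j) powr q"] by simp
    then have "ennreal (2 * level (Suc j) powr q) * emeasure lebesgue (level_set j)
        \<le> ennreal (1/2 * level j powr q) * emeasure lebesgue (level_set j)"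
      by (intro mult_right_mono ennreal_leI) auto
    moreover have "h (Suc j) = ennreal (2 * level (Suc j) powr q) * emeasure lebesgue (level_set j)"
      by (simp add: h_def ennreal_mult mult_ac)
    moreover have "ennreal (1/2 * level j powr q) = ennreal (1/2) * ennreal (level j powr q)"
      by (rule ennreal_mult) auto
    ultimately show "h (Suc j) \<le> ennreal (1/2) * (ennreal (level j powr q) * emeasure lebesgue (level_set j))"
      by (simp only: mult.assoc)
  qed
  also have "\<dots> = ennreal (1/2) * level_sum"
    unfolding level_sum_def by (rule ennreal_suminf_cmult)
  finally show ?thesis
    by (simp add: add_left_mono)
qed

lemma dyadic_max_powr_le_level_series:
  "enn_powr (dyadic_max a l g x) q \<le> ennreal (4 powr q) * (\<Sum>i. ennreal (level i powr q) * indicator (level_set i) x)"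
proof -
  obtain m where m: "dyadic_max a l g x = ennreal m" "0 \<le> m" "m \<le> B"
  proof -
    have "dyadic_max a l g x \<le> ennreal B"
      unfolding dyadic_max_def by (rule SUP_least) (rule g_le_B)
    then show thesis
      using B_pos that by (cases "dyadic_max a l g x") (auto simp: ennreal_le_iff top_unique)
  qed
  show ?thesis
  proof (cases "m = 0")
    case False
    then obtain i where i: "level (Suc i) < m" "m \<le> level i"
      using m(2,3) level_bracket by (metis order_le_less)
    then have "x \<in> level_set (Suc i)"
      using m(1) level_pos[of "Suc i"] by (simp add: mem_level_set_iff ennreal_less_iff)
    have "enn_powr (dyadic_max a l g x) q \<le> ennreal (level i powr q)"
      using m i q_ge_1 by (simp add: enn_powr_ennreal ennreal_leI powr_mono2)
    also have "\<dots> = ennreal (4 powr q) * (ennreal (level (Suc i) powr q) * indicator (level_set (Suc i)) x)"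
      using \<open>x \<in> level_set (Suc i)\<close> by (simp add: level_powr_Suc[of i] ennreal_mult)
    also have "\<dots> \<le> ennreal (4 powr q) * (\<Sum>i. ennreal (level i powr q) * indicator (level_set i) x)"
    proof (intro mult_left_mono)
      let ?f = "\<lambda>j. ennreal (level j powr q) * indicator (level_set j) x"
      show "?f (Suc i) \<le> suminf ?f"
        using ennreal_suminf_lessD[of ?f "?f (Suc i)" "Suc i"] by (meson not_le order_less_irrefl)
    qed simp
    finally show ?thesis .
  qed (simp add: m enn_powr_def)
qed

lemma dyadic_max_integral_le_level_sum:
  "(\<integral>\<^sup>+x\<in>cube a l. enn_powr (dyadic_max a l g x) q \<partial>lebesgue) \<le> ennreal (4 powr q) * level_sum"
proof -
  have "(\<integral>\<^sup>+x\<in>cube a l. enn_powr (dyadic_max a l g x) q \<partial>lebesgue)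
      \<le> (\<integral>\<^sup>+x. ennreal (4 powr q) * (\<Sum>i. ennreal (level i powr q) * indicator (level_set i) x) \<partial>lebesgue)"
    by (intro nn_integral_mono order_trans[OF _ dyadic_max_powr_le_level_series])
      (simp add: indicator_def)
  also have "\<dots> = ennreal (4 powr q) * (\<Sum>i. \<integral>\<^sup>+x. ennreal (level i powr q) * indicator (level_set i) x \<partial>lebesgue)"
    by (simp add: nn_integral_cmult nn_integral_suminf)
  also have "\<dots> = ennreal (4 powr q) * level_sum"
    by (simp add: level_sum_def nn_integral_cmult_indicator)
  finally show ?thesis .
qed

lemma good_cubes_later_disjoint:
  assumes "Q \<in> good_cubes i" "i < i'"
  shows "Q \<notin> good_cubes i'"
proof
  assume "Q \<in> good_cubes i'"
  have "Q \<in> dyadic a l"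
    using assms(1) by (auto simp: good_cubes_def dest: maximal_cubes_dyadic)
  have "Q \<subseteq> level_set i"
    using assms(1) by (auto simp: good_cubes_def level_set_eq_Union_maximal_cubes)
  also have "\<dots> \<subseteq> level_set (i' - 1)"
    using assms(2) by (intro level_set_mono) simp
  finally have "Q \<subseteq> level_set (i' - 1)" .
  then have "half_open Q \<inter> level_set (i' - 1) = half_open Q"
    using half_open_subset by blast
  then have "measure lebesgue Q \<le> measure lebesgue Q / 2"
    using \<open>Q \<in> good_cubes i'\<close> measure_half_open_dyadic[OF l_pos \<open>Q \<in> dyadic a l\<close>]
    by (simp add: good_cubes_def)
  then show False
    using measure_dyadic_pos[OF l_pos \<open>Q \<in> dyadic a l\<close>] by simp
qed

lemma good_cubes_index_unique: "Q \<in> good_cubes i \<Longrightarrow> Q \<in> good_cubes i' \<Longrightarrow> i = i'"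
  using good_cubes_later_disjoint by (metis linorder_neqE_nat)

definition good_family :: "(real^'n) set set" where
  "good_family = (\<Union>i. good_cubes i)"

definition good_index :: "(real^'n) set \<Rightarrow> nat" where
  "good_index Q = (THE i. Q \<in> good_cubes i)"

definition good_part :: "(real^'n) set \<Rightarrow> (real^'n) set" where
  "good_part Q = half_open Q - level_set (good_index Q - 1)"

lemma good_index: "Q \<in> good_cubes i \<Longrightarrow> good_index Q = i"
  unfolding good_index_def using good_cubes_index_unique by blast

lemma good_cubes_dyadic: "Q \<in> good_cubes i \<Longrightarrow> Q \<in> dyadic a l"
  by (auto simp: good_cubes_def intro: maximal_cubes_dyadic)

lemma good_part_disjoint_later:
  assumes "Q \<in> good_cubes i" "Q' \<in> good_cubes i'" "i < i'"
  shows "good_part Q \<inter> good_part Q' = {}"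
proof -
  have "Q \<subseteq> level_set i"
    using assms(1) by (auto simp: good_cubes_def level_set_eq_Union_maximal_cubes)
  also have "\<dots> \<subseteq> level_set (i' - 1)"
    using assms(3) by (intro level_set_mono) simp
  finally have "good_part Q \<subseteq> level_set (i' - 1)"
    using half_open_subset[of Q] by (auto simp: good_part_def)
  then show ?thesis
    using assms(2) by (auto simp: good_part_def good_index)
qed

lemma
  assumes "Q \<in> good_cubes i"
  shows sets_good_part: "good_part Q \<in> sets lebesgue"
    and measure_good_part: "measure lebesgue Q \<le> 2 * measure lebesgue (good_part Q)"
proof -
  have Q: "Q \<in> dyadic a l"
    using assms by (rule good_cubes_dyadic)
  have part: "good_part Q = half_open Q - (half_open Q \<inter> level_set (i - 1))"
    by (auto simp: good_part_def good_index[OF assms])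
  show "good_part Q \<in> sets lebesgue"
    unfolding part using sets_half_open_dyadic[OF l_pos Q] by auto
  have "half_open Q \<in> lmeasurable"
    using Q sets_half_open_dyadic[OF l_pos Q] half_open_subset by (blast intro: fmeasurableI2 lmeasurable_dyadic)
  then have "measure lebesgue (good_part Q)
      = measure lebesgue (half_open Q) - measure lebesgue (half_open Q \<inter> level_set (i - 1))"
    unfolding part by (intro measure_Diff) (auto simp: fmeasurable_def)
  then show "measure lebesgue Q \<le> 2 * measure lebesgue (good_part Q)"
    using assms measure_half_open_dyadic[OF l_pos Q] by (simp add: good_cubes_def)
qed

lemma disjoint_family_good_part: "disjoint_family_on good_part good_family"
  unfolding disjoint_family_on_def
proof (intro ballI impI)
  fix Q Q' assume "Q \<in> good_family" "Q' \<in> good_family" "Q \<noteq> Q'"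
  then obtain i i' where i: "Q \<in> good_cubes i" "Q' \<in> good_cubes i'"
    by (auto simp: good_family_def)
  consider "i = i'" | "i < i'" | "i' < i"
    by linarith
  then show "good_part Q \<inter> good_part Q' = {}"
  proof cases
    case 1
    then have "half_open Q \<inter> half_open Q' = {}"
      using i \<open>Q \<noteq> Q'\<close> maximal_cubes_disjoint by (auto simp: good_cubes_def)
    then show ?thesis
      by (auto simp: good_part_def)
  qed (use good_part_disjoint_later i in blast)+
qed

lemma good_family_sparse: "good_family \<in> sparse a l"
proof (rule sparseI)
  show "good_family \<subseteq> dyadic a l"
    by (auto simp: good_family_def dest: good_cubes_dyadic)
  then show "countable good_family"
    using countable_dyadic countable_subset by blast
  show "good_part Q \<subseteq> Q" for Q
    using half_open_subset by (auto simp: good_part_def)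
  show "disjoint_family_on good_part good_family"
    by (rule disjoint_family_good_part)
qed (auto simp: good_family_def sets_good_part measure_good_part)

lemma good_sum_le:
  "good_sum \<le> (\<integral>\<^sup>+Q. enn_powr (g Q) q * emeasure lebesgue Q \<partial>count_space good_family)"
proof -
  let ?h = "\<lambda>i Q. ennreal (level i powr q) * (emeasure lebesgue Q * indicator (good_cubes i) Q)"
  have "good_sum = (\<Sum>i. \<integral>\<^sup>+Q. ?h i Q \<partial>count_space good_family)"
    unfolding good_sum_def
  proof (intro suminf_cong)
    fix i
    have "good_cubes i \<subseteq> good_family"
      by (auto simp: good_family_def)
    then show "ennreal (level i powr q) * (\<integral>\<^sup>+Q. emeasure lebesgue Q \<partial>count_space (good_cubes i))
        = (\<integral>\<^sup>+Q. ?h i Q \<partial>count_space good_family)"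
      by (simp add: nn_integral_count_space_subset nn_integral_cmult)
  qed
  also have "\<dots> = (\<integral>\<^sup>+Q. (\<Sum>i. ?h i Q) \<partial>count_space good_family)"
    by (rule nn_integral_suminf[symmetric]) simp
  also have "\<dots> \<le> (\<integral>\<^sup>+Q. enn_powr (g Q) q * emeasure lebesgue Q \<partial>count_space good_family)"
  proof (intro nn_integral_mono)
    fix Q assume "Q \<in> space (count_space good_family)"
    then obtain i where i: "Q \<in> good_cubes i"
      by (auto simp: good_family_def)
    have "(\<Sum>j. ?h j Q) = (\<Sum>j\<in>{i}. ?h j Q)"
      by (rule suminf_finite) (auto simp: indicator_def dest: good_cubes_index_unique[OF i])
    also have "\<dots> = ennreal (level i powr q) * emeasure lebesgue Q"
      using i by simp
    also have "\<dots> \<le> enn_powr (g Q) q * emeasure lebesgue Q"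
    proof (intro mult_right_mono)
      have "ennreal (level i) < g Q"
        using i by (simp add: good_cubes_def maximal_cubes_def)
      then have "enn_powr (ennreal (level i)) q \<le> enn_powr (g Q) q"
        using q_ge_1 by (intro enn_powr_mono) auto
      then show "ennreal (level i powr q) \<le> enn_powr (g Q) q"
        using level_pos[of i] by (simp add: enn_powr_ennreal)
    qed simp
    finally show "(\<Sum>j. ?h j Q) \<le> enn_powr (g Q) q * emeasure lebesgue Q" .
  qed
  finally show ?thesis .
qed

lemma dyadic_max_integral_le_sparse_sup:
  "(\<integral>\<^sup>+x\<in>cube a l. enn_powr (dyadic_max a l g x) q \<partial>lebesgue)
    \<le> ennreal (2 * 4 powr q) * (SUP S\<in>sparse a l. \<integral>\<^sup>+Q. enn_powr (g Q) q * emeasure lebesgue Q \<partial>count_space S)"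
proof -
  let ?P = "SUP S\<in>sparse a l. \<integral>\<^sup>+Q. enn_powr (g Q) q * emeasure lebesgue Q \<partial>count_space S"
  have "level_sum \<le> 2 * good_sum"
    using level_sum_finite level_sum_le by (rule ennreal_absorb_half)
  also have "good_sum \<le> ?P"
    using good_sum_le good_family_sparse by (auto intro: SUP_upper2)
  finally have "ennreal (4 powr q) * level_sum \<le> ennreal (4 powr q) * (2 * ?P)"
    by (simp add: mult_left_mono)
  then show ?thesis
    using dyadic_max_integral_le_level_sum by (simp add: ennreal_mult mult_ac)
qed

end

lemma dyadic_max_integral_le_sparse_sup:
  fixes a :: "real^'n"
  assumes "0 < l" "1 \<le> q"
  shows "(\<integral>\<^sup>+x\<in>cube a l. enn_powr (dyadic_max a l g x) q \<partial>lebesgue)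
    \<le> ennreal (2 * 4 powr q) * (SUP S\<in>sparse a l. \<integral>\<^sup>+Q. enn_powr (g Q) q * emeasure lebesgue Q \<partial>count_space S)"
proof -
  let ?P = "SUP S\<in>sparse a l. \<integral>\<^sup>+Q. enn_powr (g Q) q * emeasure lebesgue Q \<partial>count_space S"
  let ?gN = "\<lambda>N Q. min (g Q) (ennreal (real N + 1))"
  have bounded: "(\<integral>\<^sup>+x\<in>cube a l. enn_powr (min (dyadic_max a l g x) (ennreal (real N + 1))) q \<partial>lebesgue)
      \<le> ennreal (2 * 4 powr q) * ?P" for N
  proof -
    interpret dyadic_level_sets a l "?gN N" "real N + 1" q
      using assms by unfold_locales auto
    have "(\<integral>\<^sup>+x\<in>cube a l. enn_powr (dyadic_max a l (?gN N) x) q \<partial>lebesgue)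
        \<le> ennreal (2 * 4 powr q) * (SUP S\<in>sparse a l. \<integral>\<^sup>+Q. enn_powr (?gN N Q) q * emeasure lebesgue Q \<partial>count_space S)"
      by (rule dyadic_max_integral_le_sparse_sup)
    also have "\<dots> \<le> ennreal (2 * 4 powr q) * ?P"
      using assms(2) by (intro mult_left_mono SUP_mono' nn_integral_mono mult_right_mono enn_powr_mono) auto
    finally show ?thesis
      by (simp add: dyadic_max_min_const)
  qed
  define f where "f N x = enn_powr (min (dyadic_max a l g x) (ennreal (real N + 1))) q * indicator (cube a l) x"
    for N x
  have f_measurable: "f N \<in> borel_measurable lebesgue" for N
    unfolding f_def by measurable
  have "incseq f"
    using assms(2) unfolding f_def
    by (intro incseq_SucI le_funI mult_right_mono enn_powr_mono min.mono ennreal_leI) auto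
  have "enn_powr (dyadic_max a l g x) q * indicator (cube a l) x = (SUP N. f N x)" for x
    using SUP_enn_powr_min_nat[OF assms(2)] by (cases "x \<in> cube a l") (auto simp: f_def)
  then have "(\<integral>\<^sup>+x\<in>cube a l. enn_powr (dyadic_max a l g x) q \<partial>lebesgue) = (\<integral>\<^sup>+x. (SUP N. f N x) \<partial>lebesgue)"
    by simp
  also have "\<dots> = (SUP N. \<integral>\<^sup>+x. f N x \<partial>lebesgue)"
    using \<open>incseq f\<close> f_measurable by (rule nn_integral_monotone_convergence_SUP)
  also have "\<dots> \<le> ennreal (2 * 4 powr q) * ?P"
    by (intro SUP_least) (unfold f_def, rule bounded)
  finally show ?thesis .
qed

section \<open>Sparse norms and maximal norms\<close>

definition frac_log_average :: "real \<Rightarrow> real \<Rightarrow> (real^'n \<Rightarrow> real) \<Rightarrow> (real^'n) set \<Rightarrow> ennreal" where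
  "frac_log_average lam \<alpha> f Q = ennreal (measure lebesgue Q powr (lam / real CARD('n) - 1) * logw \<alpha> Q)
     * (\<integral>\<^sup>+y\<in>Q. ennreal \<bar>f y\<bar> \<partial>lebesgue)"

lemma Mmax_eq_dyadic_max: "Mmax lam \<alpha> a l f = dyadic_max a l (frac_log_average lam \<alpha> f)"
  by (simp add: Mmax_def dyadic_max_def frac_log_average_def fun_eq_iff)

lemma logw_pos: "0 < logw \<alpha> Q"
  unfolding logw_def by simp

lemma enn_powr_weight_split:
  assumes "0 < \<mu>" "0 < q" "0 \<le> w"
  shows "enn_powr (ennreal (w * \<mu> powr (1/p - 1)) * I) q
    = enn_powr (ennreal (\<mu> powr (1/p - 1/q - 1) * w) * I) q * ennreal \<mu>"
proof -
  have "\<mu> powr (1/p - 1) = \<mu> powr (1/q) * \<mu> powr (1/p - 1/q - 1)"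
    by (simp flip: powr_add)
  then have weight: "w * \<mu> powr (1/p - 1) = \<mu> powr (1/q) * (\<mu> powr (1/p - 1/q - 1) * w)"
    by (simp add: mult_ac)
  have "ennreal (w * \<mu> powr (1/p - 1)) * I
      = ennreal (\<mu> powr (1/q)) * (ennreal (\<mu> powr (1/p - 1/q - 1) * w) * I)"
    unfolding weight using assms by (simp add: ennreal_mult mult.assoc)
  then have "enn_powr (ennreal (w * \<mu> powr (1/p - 1)) * I) q
      = enn_powr (ennreal (\<mu> powr (1/q)) * (ennreal (\<mu> powr (1/p - 1/q - 1) * w) * I)) q"
    by (rule arg_cong)
  also have "\<dots> = ennreal ((\<mu> powr (1/q)) powr q) * enn_powr (ennreal (\<mu> powr (1/p - 1/q - 1) * w) * I) q"
    using assms(1) by (simp add: enn_powr_cmult)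
  also have "(\<mu> powr (1/q)) powr q = \<mu>"
    using assms(1,2) by (simp add: powr_powr)
  finally show ?thesis
    by (simp add: mult.commute)
qed

lemma SR_norm_eq_sparse_sup:
  fixes a :: "real^'n"
  assumes "0 < l" "0 < q"
  shows "SR_norm p q \<alpha> a l f = enn_powr (SUP S\<in>sparse a l.
    \<integral>\<^sup>+Q. enn_powr (frac_log_average (real CARD('n) * (1/p - 1/q)) \<alpha> f Q) q * emeasure lebesgue Q
      \<partial>count_space S) (1/q)"
  unfolding SR_norm_def
proof (intro arg_cong[where f="\<lambda>x. enn_powr x (1/q)"] SUP_cong refl nn_integral_cong)
  fix S Q assume "S \<in> sparse a l" "Q \<in> space (count_space S)"
  then have Q: "Q \<in> dyadic a l"
    by (auto simp: sparse_def)
  have "real CARD('n) * (1/p - 1/q) / real CARD('n) - 1 = 1/p - 1/q - 1"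
    by simp
  then show "enn_powr (ennreal (logw \<alpha> Q * measure lebesgue Q powr (1/p - 1)) * (\<integral>\<^sup>+x\<in>Q. ennreal \<bar>f x\<bar> \<partial>lebesgue)) q
      = enn_powr (frac_log_average (real CARD('n) * (1/p - 1/q)) \<alpha> f Q) q * emeasure lebesgue Q"
    using enn_powr_weight_split[OF measure_dyadic_pos[OF assms(1) Q] assms(2) less_imp_le[OF logw_pos]]
    by (simp add: frac_log_average_def emeasure_dyadic[OF Q])
qed

lemma M_Lq_norm_eq_dyadic_max:
  "M_Lq_norm lam \<alpha> q a l f
    = enn_powr (\<integral>\<^sup>+x\<in>cube a l. enn_powr (dyadic_max a l (frac_log_average lam \<alpha> f) x) q \<partial>lebesgue) (1/q)"
  by (simp add: M_Lq_norm_def Mmax_eq_dyadic_max)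

lemma
  fixes a :: "real^'n"
  assumes "0 < l" "1 \<le> q"
  shows SR_norm_le_M_Lq_norm: "SR_norm p q \<alpha> a l f \<le> ennreal 8 * M_Lq_norm (real CARD('n) * (1/p - 1/q)) \<alpha> q a l f"
    and M_Lq_norm_le_SR_norm: "M_Lq_norm (real CARD('n) * (1/p - 1/q)) \<alpha> q a l f \<le> ennreal 8 * SR_norm p q \<alpha> a l f"
proof -
  let ?g = "frac_log_average (real CARD('n) * (1/p - 1/q)) \<alpha> f"
  define P where "P = (SUP S\<in>sparse a l. \<integral>\<^sup>+Q. enn_powr (?g Q) q * emeasure lebesgue Q \<partial>count_space S)"
  define I where "I = (\<integral>\<^sup>+x\<in>cube a l. enn_powr (dyadic_max a l ?g x) q \<partial>lebesgue)"
  have SR: "SR_norm p q \<alpha> a l f = enn_powr P (1/q)"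
    unfolding P_def using assms by (intro SR_norm_eq_sparse_sup) auto
  have M: "M_Lq_norm (real CARD('n) * (1/p - 1/q)) \<alpha> q a l f = enn_powr I (1/q)"
    unfolding I_def by (rule M_Lq_norm_eq_dyadic_max)
  have root2: "2 powr (1/q) \<le> (2::real)"
    using powr_mono[of "1/q" 1 2] assms(2) by simp
  have "P \<le> 2 * I"
    unfolding P_def I_def using assms by (intro SUP_least sparse_sum_le_dyadic_max_integral) auto
  then have "enn_powr P (1/q) \<le> enn_powr (ennreal 2 * I) (1/q)"
    using assms(2) by (intro enn_powr_mono) auto
  also have "\<dots> = ennreal (2 powr (1/q)) * enn_powr I (1/q)"
    by (rule enn_powr_cmult) simp
  also have "\<dots> \<le> ennreal 8 * enn_powr I (1/q)"
    using root2 by (intro mult_right_mono ennreal_leI) auto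
  finally show "SR_norm p q \<alpha> a l f \<le> ennreal 8 * M_Lq_norm (real CARD('n) * (1/p - 1/q)) \<alpha> q a l f"
    unfolding SR M .
  have "I \<le> ennreal (2 * 4 powr q) * P"
    unfolding P_def I_def using assms by (rule dyadic_max_integral_le_sparse_sup)
  then have "enn_powr I (1/q) \<le> enn_powr (ennreal (2 * 4 powr q) * P) (1/q)"
    using assms(2) by (intro enn_powr_mono) auto
  also have "\<dots> = ennreal ((2 * 4 powr q) powr (1/q)) * enn_powr P (1/q)"
    by (rule enn_powr_cmult) simp
  also have "(2 * 4 powr q) powr (1/q) = 2 powr (1/q) * 4"
    using assms(2) by (simp add: powr_mult powr_powr)
  also have "ennreal (2 powr (1/q) * 4) \<le> ennreal 8"
    using root2 by (intro ennreal_leI) auto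
  finally show "M_Lq_norm (real CARD('n) * (1/p - 1/q)) \<alpha> q a l f \<le> ennreal 8 * SR_norm p q \<alpha> a l f"
    unfolding SR M by (simp add: mult_right_mono)
qed

lemma SR_space_eq_M_Lq_space:
  fixes a :: "real^'n"
  assumes "0 < l" "1 \<le> q"
  shows "SR_space p q \<alpha> a l = M_Lq_space (real CARD('n) * (1/p - 1/q)) \<alpha> q a l"
proof -
  have "Mmax lam \<alpha> a l f \<in> borel_measurable (lebesgue_on (cube a l))" for lam f
    unfolding Mmax_eq_dyadic_max by (rule measurable_restrict_space1) simp
  moreover have "SR_norm p q \<alpha> a l f < \<infinity> \<longleftrightarrow> M_Lq_norm (real CARD('n) * (1/p - 1/q)) \<alpha> q a l f < \<infinity>" for f
  proof
    assume "SR_norm p q \<alpha> a l f < \<infinity>"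
    have "M_Lq_norm (real CARD('n) * (1/p - 1/q)) \<alpha> q a l f \<le> ennreal 8 * SR_norm p q \<alpha> a l f"
      using assms by (rule M_Lq_norm_le_SR_norm)
    also have "\<dots> < \<infinity>"
      using \<open>SR_norm p q \<alpha> a l f < \<infinity>\<close> by (simp add: ennreal_mult_less_top)
    finally show "M_Lq_norm (real CARD('n) * (1/p - 1/q)) \<alpha> q a l f < \<infinity>" .
  next
    assume "M_Lq_norm (real CARD('n) * (1/p - 1/q)) \<alpha> q a l f < \<infinity>"
    have "SR_norm p q \<alpha> a l f \<le> ennreal 8 * M_Lq_norm (real CARD('n) * (1/p - 1/q)) \<alpha> q a l f"
      using assms by (rule SR_norm_le_M_Lq_norm)
    also have "\<dots> < \<infinity>"
      using \<open>M_Lq_norm (real CARD('n) * (1/p - 1/q)) \<alpha> q a l f < \<infinity>\<close> by (simp add: ennreal_mult_less_top)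
    finally show "SR_norm p q \<alpha> a l f < \<infinity>" .
  qed
  ultimately show ?thesis
    by (auto simp: SR_space_def M_Lq_space_def)
qed

theorem theorem3p1:
  fixes p q \<alpha> :: real
  assumes "1 \<le> p" and "p \<le> q" and "p = q \<Longrightarrow> \<alpha> \<le> 0"
  shows "\<exists>C::real. C > 0 \<and>
    (\<forall>(a::real^'n) l. l > 0 \<longrightarrow>
       SR_space p q \<alpha> a l = M_Lq_space (real CARD('n) * (1/p - 1/q)) \<alpha> q a l \<and>
       (\<forall>f. set_integrable lebesgue (cube a l) f \<longrightarrow>
          SR_norm p q \<alpha> a l f \<le> ennreal C * M_Lq_norm (real CARD('n) * (1/p - 1/q)) \<alpha> q a l f \<and>
          M_Lq_norm (real CARD('n) * (1/p - 1/q)) \<alpha> q a l f \<le> ennreal C * SR_norm p q \<alpha> a l f))"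
proof -
  have "1 \<le> q"
    using assms(1,2) by linarith
  then show ?thesis
    by (intro exI[of _ 8] conjI allI impI SR_space_eq_M_Lq_space SR_norm_le_M_Lq_norm M_Lq_norm_le_SR_norm)
      auto
qed

end
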